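(* Let $G$ be a locally compact Hausdorff group, $H,K$ closed subgroups of $G$, and $N$ the normalizer of $K$ in $G$. If $\mu$ is an $N$-strongly quasi-invariant measure on $K\backslash G/H$ which arises from a rho-function, then $\operatorname{supp}\mu=K\backslash G/H$.
   Context: $dx,dh,dk$ are left Haar measures on $G,H,K$ with modular functions $\Delta_G,\Delta_H,\Delta_K$. $N=\{g\in G: gK=Kg\}$. $K\backslash G/H=\{KxH\}$ carries the quotient topology from $q(x)=KxH=:\ddot x$; $N$ acts on it by $n\cdot KxH=KnxH$. A rho-function for $(K,G,H)$ is a non-negative locally integrable $\rho$ on $G$ with $\rho(kxh)=\frac{\Delta_K(k)\Delta_H(h)}{\Delta_G(h)}\rho(x)$. For a positive Radon measure $\mu$ on $K\backslash G/H$ and $n\in N$, $\mu_n(E)=\mu(n\cdot E)$; $\mu$ is $N$-strongly quasi-invariant if there is a continuous positive $\lambda$ on $N\times K\backslash G/H$ with $d\mu_n=\lambda(n,\cdot)\,d\mu$ for all $n\in N$. $\mu$ arises from a rho-function if there is a rho-function $\rho:G\to(0,+\infty)$ with $\int_{K\backslash G/H}\int_K\int_H f(k^{-1}xh)\,dh\,dk\,d\mu(\ddot x)=\int_G f(x)\rho(x)\,dx$ for all $f\in C_c(G)$. *)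

theory Defs
  imports "HOL-Analysis.Analysis"
begin

text \<open>The ambient group G is the whole type 'a (written additively, but NOT assumed
  commutative: class group_add). Subgroups are subsets of 'a.\<close>

definition closed_subgroup :: "'a::{group_add,topological_space} set \<Rightarrow> bool" where
  "closed_subgroup S \<longleftrightarrow> closed S \<and> 0 \<in> S \<and> (\<forall>a\<in>S. \<forall>b\<in>S. a + b \<in> S) \<and> (\<forall>a\<in>S. - a \<in> S)"

text \<open>Positive Radon measure on the closed set S, viewed as a Borel measure on 'a
  concentrated on S (finite on compacts, outer regular on Borel sets, inner regular on opens).\<close>
definition radon_on :: "'a::topological_space set \<Rightarrow> 'a measure \<Rightarrow> bool" where
  "radon_on S M \<longleftrightarrow> sets M = sets borel \<and> emeasure M (- S) = 0 \<and>
     (\<forall>C. compact C \<and> C \<subseteq> S \<longrightarrow> emeasure M C < \<infinity>) \<and>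
     (\<forall>A\<in>sets borel. emeasure M A = (INF U\<in>{U. open U \<and> A \<subseteq> U}. emeasure M U)) \<and>
     (\<forall>U. open U \<longrightarrow> emeasure M U = (SUP C\<in>{C. compact C \<and> C \<subseteq> U \<inter> S}. emeasure M C))"

definition haar_on :: "'a::{group_add,topological_space} set \<Rightarrow> 'a measure \<Rightarrow> bool" where
  "haar_on S M \<longleftrightarrow> radon_on S M \<and> emeasure M S > 0 \<and>
     (\<forall>s\<in>S. \<forall>A\<in>sets borel. emeasure M ((\<lambda>y. s + y) ` A) = emeasure M A)"

definition modular_fn :: "'a::{group_add,topological_space} set \<Rightarrow> 'a measure \<Rightarrow> ('a \<Rightarrow> real) \<Rightarrow> bool" where
  "modular_fn S M \<Delta> \<longleftrightarrow> (\<forall>s\<in>S. \<Delta> s > 0 \<and>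
     (\<forall>A\<in>sets borel. emeasure M ((\<lambda>y. y + s) ` A) = ennreal (\<Delta> s) * emeasure M A))"

definition normalizer :: "'a::group_add set \<Rightarrow> 'a set" where
  "normalizer K = {g. (\<lambda>k. g + k) ` K = (\<lambda>k. k + g) ` K}"

definition dcoset :: "'a::group_add set \<Rightarrow> 'a set \<Rightarrow> 'a \<Rightarrow> 'a set" where
  "dcoset K H x = {k + x + h | k h. k \<in> K \<and> h \<in> H}"

definition dcosets :: "'a::group_add set \<Rightarrow> 'a set \<Rightarrow> 'a set set" where
  "dcosets K H = range (dcoset K H)"

definition dcoset_top :: "'a::{group_add,topological_space} set \<Rightarrow> 'a set \<Rightarrow> 'a set topology" where
  "dcoset_top K H = topology (\<lambda>U. U \<subseteq> dcosets K H \<and> open (dcoset K H -` U))"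

lemma istopology_dcoset_top:
  "istopology (\<lambda>U. U \<subseteq> dcosets K H \<and> open (dcoset K H -` (U::'a::{group_add,topological_space} set set)))"
  unfolding istopology_def
  by (auto simp: vimage_Union vimage_Int intro!: open_Union)

lemma openin_dcoset_top:
  "openin (dcoset_top K H) U \<longleftrightarrow> U \<subseteq> dcosets K H \<and> open (dcoset K H -` U)"
  unfolding dcoset_top_def using istopology_dcoset_top topology_inverse' by metis

definition nact :: "'a::group_add set \<Rightarrow> 'a set \<Rightarrow> 'a \<Rightarrow> 'a set \<Rightarrow> 'a set" where
  "nact K H n p = dcoset K H (n + (SOME x. x \<in> p))"

definition borel_top :: "'b topology \<Rightarrow> 'b measure" where
  "borel_top X = sigma (topspace X) {U. openin X U}"

definition radon_top :: "'b topology \<Rightarrow> 'b measure \<Rightarrow> bool" where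
  "radon_top X M \<longleftrightarrow> space M = topspace X \<and> sets M = sets (borel_top X) \<and>
     (\<forall>C. compactin X C \<longrightarrow> emeasure M C < \<infinity>) \<and>
     (\<forall>A\<in>sets M. emeasure M A = (INF U\<in>{U. openin X U \<and> A \<subseteq> U}. emeasure M U)) \<and>
     (\<forall>U. openin X U \<longrightarrow> emeasure M U = (SUP C\<in>{C. compactin X C \<and> C \<subseteq> U}. emeasure M C))"

definition strongly_quasi_invariant ::
  "'a::{group_add,topological_space} set \<Rightarrow> 'a set \<Rightarrow> 'a set measure \<Rightarrow> bool" where
  "strongly_quasi_invariant K H \<mu> \<longleftrightarrow>
     (\<exists>lam :: 'a \<times> 'a set \<Rightarrow> real.
        continuous_map (prod_topology (subtopology euclidean (normalizer K)) (dcoset_top K H)) euclideanreal lam \<and>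
        (\<forall>n\<in>normalizer K. \<forall>p\<in>dcosets K H. lam (n, p) > 0) \<and>
        (\<forall>n\<in>normalizer K. \<forall>E\<in>sets \<mu>.
            emeasure \<mu> (nact K H n ` E) = (\<integral>\<^sup>+ p\<in>E. ennreal (lam (n, p)) \<partial>\<mu>)))"

definition rho_function ::
  "'a::{group_add,topological_space} set \<Rightarrow> 'a set \<Rightarrow> 'a measure \<Rightarrow> ('a \<Rightarrow> real) \<Rightarrow> ('a \<Rightarrow> real) \<Rightarrow> ('a \<Rightarrow> real)
     \<Rightarrow> ('a \<Rightarrow> real) \<Rightarrow> bool" where
  "rho_function K H dx \<Delta>G \<Delta>K \<Delta>H \<rho> \<longleftrightarrow>
     (\<forall>x. \<rho> x \<ge> 0) \<and> \<rho> \<in> borel_measurable dx \<and>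
     (\<forall>C. compact C \<longrightarrow> set_integrable dx C \<rho>) \<and>
     (\<forall>k\<in>K. \<forall>h\<in>H. \<forall>x. \<rho> (k + x + h) = \<Delta>K k * \<Delta>H h / \<Delta>G h * \<rho> x)"

definition compactly_supported :: "('a::topological_space \<Rightarrow> complex) \<Rightarrow> bool" where
  "compactly_supported f \<longleftrightarrow> continuous_on UNIV f \<and> compact (closure {x. f x \<noteq> 0})"

definition arises_from_rho ::
  "'a::{group_add,topological_space} set \<Rightarrow> 'a set \<Rightarrow> 'a measure \<Rightarrow> 'a measure \<Rightarrow> 'a measure
     \<Rightarrow> ('a \<Rightarrow> real) \<Rightarrow> ('a \<Rightarrow> real) \<Rightarrow> ('a \<Rightarrow> real) \<Rightarrow> 'a set measure \<Rightarrow> bool" where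
  "arises_from_rho K H dx dk dh \<Delta>G \<Delta>K \<Delta>H \<mu> \<longleftrightarrow>
     (\<exists>\<rho>. rho_function K H dx \<Delta>G \<Delta>K \<Delta>H \<rho> \<and> (\<forall>x. \<rho> x > 0) \<and>
        (\<forall>f. compactly_supported f \<longrightarrow>
           (\<integral>p. (\<integral>k. (\<integral>h. f (- k + (SOME x. x \<in> p) + h) \<partial>dh) \<partial>dk) \<partial>\<mu>)
             = (\<integral>x. f x * complex_of_real (\<rho> x) \<partial>dx)))"

definition measure_support :: "'b topology \<Rightarrow> 'b measure \<Rightarrow> 'b set" where
  "measure_support X M = {p \<in> topspace X. \<forall>U. openin X U \<and> p \<in> U \<longrightarrow> emeasure M U > 0}"

end

theory Submission
  imports Defs
begin

text \<open>Suppose an open set \<open>U\<close> of \<open>K\<setminus>G/H\<close> containing \<open>KyH\<close> were \<open>\<mu>\<close>-null. Take a continuous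
  bump \<open>0 \<le> g \<le> 1\<close> with \<open>g y = 1\<close> and compact support inside the open set \<open>q\<^sup>-\<^sup>1(U)\<close>.
  For \<open>KxH \<notin> U\<close> every point \<open>k\<^sup>-\<^sup>1xh\<close> lies in \<open>KxH\<close>, so \<open>g\<close> vanishes there and the left-hand
  side of the rho-function identity for \<open>f = g\<close> is zero. The right-hand side \<open>\<integral> g \<rho> dx\<close> is
  positive, because \<open>\<rho> > 0\<close> and a Haar measure charges every nonempty open set.\<close>

lemma Hausdorff_space_euclidean_t2: "Hausdorff_space (euclidean :: 'a::t2_space topology)"
  unfolding Hausdorff_space_def disjnt_def by (simp; meson hausdorff)

lemma open_translation_left:
  fixes W :: "'a::{group_add,topological_space} set"
  assumes add: "continuous_on UNIV (\<lambda>p::'a \<times> 'a. fst p + snd p)" and "open W"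
  shows "open ((+) s ` W)"
proof -
  have "continuous_on UNIV (\<lambda>y::'a. fst (-s, y) + snd (-s, y))"
    by (rule continuous_on_compose2[OF add]) (auto intro: continuous_intros)
  then have "continuous_on UNIV (\<lambda>y::'a. -s + y)" by simp
  moreover have "(+) s ` W = (\<lambda>y. -s + y) -` W"
    by (auto simp: image_iff) (metis add_minus_cancel)
  ultimately show ?thesis using open_vimage[OF \<open>open W\<close>] by metis
qed

lemma AE_in_radon_on:
  assumes "radon_on S M" and "closed S"
  shows "AE x in M. x \<in> S"
proof -
  have "- S \<in> null_sets M"
    using assms unfolding radon_on_def by (simp add: null_sets_def borel_open open_Compl)
  from AE_not_in[OF this] show ?thesis by simp
qed

lemma haar_on_open_pos:
  fixes dx :: "'a::{group_add,t2_space} measure"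
  assumes add: "continuous_on UNIV (\<lambda>p::'a \<times> 'a. fst p + snd p)"
    and haar: "haar_on UNIV dx" and W: "open W" "w \<in> W"
  shows "emeasure dx W > 0"
proof (rule ccontr)
  assume "\<not> emeasure dx W > 0"
  then have W0: "emeasure dx W = 0" by (simp add: not_gr_zero)
  have sets: "sets dx = sets borel"
    and inner: "emeasure dx UNIV = (SUP C\<in>{C. compact C \<and> C \<subseteq> UNIV \<inter> UNIV}. emeasure dx C)"
    and pos: "emeasure dx UNIV > 0"
    and inv: "\<And>s A. A \<in> sets borel \<Longrightarrow> emeasure dx ((+) s ` A) = emeasure dx A"
    using haar unfolding haar_on_def radon_on_def by auto
  have translate_null: "(+) s ` W \<in> null_sets dx" for s
    using sets open_translation_left[OF add W(1)] inv[of W] W0 W(1) by (simp add: null_sets_def)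
  have "emeasure dx C = 0" if C: "compact C" for C
  proof -
    have "c \<in> (+) (c + -w) ` W" for c
      using W(2) image_eqI[of c "(+) (c + -w)" w] by (simp add: add.assoc)
    then have "C \<subseteq> (\<Union>c\<in>C. (+) (c + -w) ` W)" by blast
    then obtain C' where "finite C'" "C \<subseteq> (\<Union>c\<in>C'. (+) (c + -w) ` W)"
      by (rule compactE_image[OF C open_translation_left[OF add W(1)]]) blast
    moreover have "(\<Union>c\<in>C'. (+) (c + -w) ` W) \<in> null_sets dx"
      using \<open>finite C'\<close> translate_null by (intro null_sets_UN') (auto intro: countable_finite)
    moreover have "C \<in> sets dx" using sets borel_closed[OF compact_imp_closed[OF C]] by simp
    ultimately show ?thesis by (metis null_setsD1 null_sets_subset)
  qed
  then have "(SUP C\<in>{C. compact C \<and> C \<subseteq> UNIV \<inter> UNIV}. emeasure dx C) \<le> 0"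
    by (intro SUP_least) simp
  with inner pos show False by simp
qed

lemma integral_pos_haar_on:
  fixes dx :: "'a::{group_add,t2_space} measure" and g \<rho> :: "'a \<Rightarrow> real"
  assumes add: "continuous_on UNIV (\<lambda>p::'a \<times> 'a. fst p + snd p)" and haar: "haar_on UNIV dx"
    and g: "continuous_on UNIV g" "\<And>x. 0 \<le> g x" "g y > 0"
    and \<rho>: "\<And>x. \<rho> x > 0" and int: "integrable dx (\<lambda>x. g x * \<rho> x)"
  shows "(\<integral>x. g x * \<rho> x \<partial>dx) > 0"
proof -
  define Z where "Z = g -` {0<..}"
  have "open Z" unfolding Z_def using open_vimage[OF open_greaterThan g(1)] .
  have sets: "sets dx = sets borel" using haar unfolding haar_on_def radon_on_def by simp
  have nonneg: "AE x in dx. 0 \<le> g x * \<rho> x" using g(2) \<rho> by (simp add: less_imp_le)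
  have "{x \<in> space dx. g x * \<rho> x \<noteq> 0} = Z"
    using g(2) \<rho> sets_eq_imp_space_eq[OF sets] unfolding Z_def
    by (auto simp: less_le dest: sym[of 0])
  moreover have "emeasure dx Z > 0"
    using haar_on_open_pos[OF add haar \<open>open Z\<close>] g(3) unfolding Z_def by blast
  ultimately have "\<not> (AE x in dx. g x * \<rho> x = 0)"
    using sets \<open>open Z\<close> by (subst AE_iff_measurable[OF _ refl]) auto
  then show ?thesis
    using integral_nonneg_eq_0_iff_AE[OF int nonneg] integral_nonneg_AE[OF nonneg] by simp
qed

lemma integrable_mult_bounded_by_indicator:
  fixes g \<rho> :: "'a \<Rightarrow> real"
  assumes "set_integrable M C \<rho>" "g \<in> borel_measurable M" "\<rho> \<in> borel_measurable M"
    and "\<And>x. \<bar>g x\<bar> \<le> 1" "\<And>x. g x \<noteq> 0 \<Longrightarrow> x \<in> C"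
  shows "integrable M (\<lambda>x. g x * \<rho> x)"
proof (rule Bochner_Integration.integrable_bound)
  show "integrable M (\<lambda>x. indicator C x *\<^sub>R \<rho> x)"
    using assms(1) unfolding set_integrable_def .
  show "AE x in M. norm (g x * \<rho> x) \<le> norm (indicator C x *\<^sub>R \<rho> x)"
  proof (rule AE_I2)
    fix x
    show "norm (g x * \<rho> x) \<le> norm (indicator C x *\<^sub>R \<rho> x)"
      using assms(4)[of x] assms(5)[of x]
      by (cases "x \<in> C") (force simp: abs_mult mult_left_le_one_le)+
  qed
qed (use assms(2,3) in measurable)

lemma integral_bump_mult_rho_pos:
  fixes dx :: "'a::{group_add,t2_space} measure" and g :: "'a \<Rightarrow> real"
  assumes add: "continuous_on UNIV (\<lambda>p::'a \<times> 'a. fst p + snd p)" and haar: "haar_on UNIV dx"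
    and \<rho>: "rho_function K H dx \<Delta>G \<Delta>K \<Delta>H \<rho>" "\<And>x. \<rho> x > 0"
    and g: "continuous_on UNIV g" "\<And>x. 0 \<le> g x" "\<And>x. g x \<le> 1" "g y = 1"
    and C: "compact C" "\<And>x. g x \<noteq> 0 \<Longrightarrow> x \<in> C"
  shows "(\<integral>x. g x * \<rho> x \<partial>dx) > 0"
proof (rule integral_pos_haar_on[OF add haar g(1,2), of y])
  show "integrable dx (\<lambda>x. g x * \<rho> x)"
  proof (rule integrable_mult_bounded_by_indicator)
    have "sets dx = sets borel" using haar unfolding haar_on_def radon_on_def by simp
    then show "g \<in> borel_measurable dx"
      using borel_measurable_continuous_onI[OF g(1)] measurable_cong_sets by blast
    show "set_integrable dx C \<rho>" "\<rho> \<in> borel_measurable dx"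
      using \<rho>(1) C(1) unfolding rho_function_def by auto
  qed (use g(2,3) C(2) in auto)
qed (use g(4) \<rho>(2) in auto)

lemma compactly_supportedI:
  fixes f :: "'a::t2_space \<Rightarrow> complex"
  assumes "continuous_on UNIV f" "compact C" "\<And>x. f x \<noteq> 0 \<Longrightarrow> x \<in> C"
  shows "compactly_supported f"
proof -
  have "closure {x. f x \<noteq> 0} \<subseteq> C"
    using assms(2,3) by (intro closure_minimal compact_imp_closed) auto
  then show ?thesis
    unfolding compactly_supported_def
    using assms(1,2) compact_Int_closed[OF assms(2) closed_closure] by (metis inf.absorb2)
qed

lemma exists_compactly_supported_bump:
  fixes V :: "'a::t2_space set"
  assumes "locally_compact_space (euclidean :: 'a topology)" and "open V" "y \<in> V"
  obtains g :: "'a \<Rightarrow> real" and C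
  where "continuous_on UNIV g" "\<And>x. 0 \<le> g x" "\<And>x. g x \<le> 1" "g y = 1"
    "compact C" "C \<subseteq> V" "\<And>x. g x \<noteq> 0 \<Longrightarrow> x \<in> C"
proof -
  have reg: "regular_space (euclidean :: 'a topology)"
    using locally_compact_Hausdorff_imp_regular_space[OF assms(1) Hausdorff_space_euclidean_t2] .
  have "neighbourhood_base_of (\<lambda>C. compactin euclidean C \<and> closedin euclidean C)
      (euclidean :: 'a topology)"
    using locally_compact_regular_space_neighbourhood_base assms(1) reg by blast
  then obtain W C where W: "open W" "y \<in> W" "W \<subseteq> C" and C: "compact C" "C \<subseteq> V"
    using assms(2,3) unfolding neighbourhood_base_of by (metis open_openin compactin_euclidean_iff)
  have "completely_regular_space (euclidean :: 'a topology)"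
    using locally_compact_regular_imp_completely_regular_space assms(1) reg by blast
  moreover have "closedin euclidean (- W)" using W(1) by (simp add: closed_Compl)
  ultimately obtain \<phi> :: "'a \<Rightarrow> real"
    where \<phi>: "continuous_map euclidean (top_of_set {0..1}) \<phi>" "\<phi> y = 0" "\<phi> ` (- W) \<subseteq> {1}"
    using W(2) unfolding completely_regular_space_def by (metis Diff_iff UNIV_I topspace_euclidean
        double_complement ComplD)
  have "continuous_on UNIV \<phi>" "\<And>x. \<phi> x \<in> {0..1}"
    using \<phi>(1) unfolding continuous_map_in_subtopology by auto
  then show ?thesis
    using \<phi>(2,3) W(3) C by (intro that[of "\<lambda>x. 1 - \<phi> x" C]) (auto intro!: continuous_intros)
qed

lemma in_dcoset_self:
  assumes "closed_subgroup K" "closed_subgroup H"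
  shows "y \<in> dcoset K H y"
proof -
  have "y = 0 + y + 0" by simp
  with assms show ?thesis unfolding dcoset_def closed_subgroup_def by blast
qed

lemma dcoset_add_left_right:
  assumes K: "closed_subgroup K" and H: "closed_subgroup H" and "k' \<in> K" "h' \<in> H"
  shows "dcoset K H (k' + y + h') = dcoset K H y"
proof
  show "dcoset K H (k' + y + h') \<subseteq> dcoset K H y"
  proof
    fix x assume "x \<in> dcoset K H (k' + y + h')"
    then obtain k h where kh: "k \<in> K" "h \<in> H" "x = (k + k') + y + (h' + h)"
      unfolding dcoset_def by (auto simp: add.assoc)
    then show "x \<in> dcoset K H y"
      using K H assms(3,4) unfolding dcoset_def closed_subgroup_def by blast
  qed
  show "dcoset K H y \<subseteq> dcoset K H (k' + y + h')"
  proof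
    fix x assume "x \<in> dcoset K H y"
    then obtain k h where kh: "k \<in> K" "h \<in> H" "x = k + y + h"
      unfolding dcoset_def by blast
    then have "x = (k + - k') + (k' + y + h') + (- h' + h)"
      by (simp only: add.assoc minus_add_cancel add_minus_cancel)
    then show "x \<in> dcoset K H (k' + y + h')"
      using K H kh assms(3,4) unfolding dcoset_def closed_subgroup_def by blast
  qed
qed

lemma dcoset_translate_representative:
  assumes K: "closed_subgroup K" and H: "closed_subgroup H"
    and "p \<in> dcosets K H" "k \<in> K" "h \<in> H"
  shows "dcoset K H (- k + (SOME x. x \<in> p) + h) = p"
proof -
  obtain y where p: "p = dcoset K H y" using assms(3) unfolding dcosets_def by blast
  then have "(SOME x. x \<in> p) \<in> p" using in_dcoset_self[OF K H] by (metis someI)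
  then obtain k' h' where "k' \<in> K" "h' \<in> H" "(SOME x. x \<in> p) = k' + y + h'"
    unfolding p dcoset_def by blast
  moreover have "- k + (k' + y + h') + h = (- k + k') + y + (h' + h)" by (simp only: add.assoc)
  moreover have "- k + k' \<in> K" "h' + h \<in> H"
    using K H assms(4,5) \<open>k' \<in> K\<close> \<open>h' \<in> H\<close> unfolding closed_subgroup_def by blast+
  ultimately show ?thesis using dcoset_add_left_right[OF K H] p by metis
qed

lemma dcoset_iterated_integral_eq_0:
  assumes K: "closed_subgroup K" and H: "closed_subgroup H"
    and "AE k in dk. k \<in> K" "AE h in dh. h \<in> H"
    and "U \<in> null_sets \<mu>" "space \<mu> \<subseteq> dcosets K H"
    and f: "\<And>x. f x \<noteq> 0 \<Longrightarrow> dcoset K H x \<in> U"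
  shows "(\<integral>p. (\<integral>k. (\<integral>h. f (- k + (SOME x. x \<in> p) + h) \<partial>dh) \<partial>dk) \<partial>\<mu>) = 0"
proof (rule integral_eq_zero_AE)
  show "AE p in \<mu>. (\<integral>k. (\<integral>h. f (- k + (SOME x. x \<in> p) + h) \<partial>dh) \<partial>dk) = 0"
    using AE_not_in[OF assms(5)] AE_space
  proof eventually_elim
    case (elim p)
    with assms(6) have "p \<notin> U" "p \<in> dcosets K H" by auto
    have "f (- k + (SOME x. x \<in> p) + h) = 0" if "k \<in> K" "h \<in> H" for k h
      using f dcoset_translate_representative[OF K H \<open>p \<in> dcosets K H\<close> that] \<open>p \<notin> U\<close> by metis
    with assms(3,4) show ?case
      by (auto intro!: integral_eq_zero_AE elim: AE_mp)
  qed
qed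

lemma topspace_dcoset_top: "topspace (dcoset_top K H) = dcosets K H"
proof -
  have "dcoset K H -` dcosets K H = UNIV" unfolding dcosets_def by blast
  then have "openin (dcoset_top K H) (dcosets K H)" unfolding openin_dcoset_top by simp
  then have "dcosets K H \<subseteq> topspace (dcoset_top K H)" by (rule openin_subset)
  moreover have "topspace (dcoset_top K H) \<subseteq> dcosets K H"
    using openin_topspace[of "dcoset_top K H"] unfolding openin_dcoset_top by blast
  ultimately show ?thesis by (rule antisym[rotated])
qed

lemma openin_in_sets_borel_top: "openin X U \<Longrightarrow> U \<in> sets (borel_top X)"
  unfolding borel_top_def by (rule in_measure_of) (auto dest: openin_subset)

lemma emeasure_open_pos_arises_from_rho:
  fixes K H :: "'a::{group_add, t2_space} set" and \<mu> :: "'a set measure"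
  assumes add: "continuous_on UNIV (\<lambda>p::'a \<times> 'a. fst p + snd p)"
    and lc: "locally_compact_space (euclidean :: 'a topology)"
    and H: "closed_subgroup H" and K: "closed_subgroup K"
    and haar: "haar_on UNIV dx" "haar_on K dk" "haar_on H dh"
    and \<mu>: "radon_top (dcoset_top K H) \<mu>"
    and rho: "arises_from_rho K H dx dk dh \<Delta>G \<Delta>K \<Delta>H \<mu>"
    and U: "openin (dcoset_top K H) U" "p \<in> U"
  shows "emeasure \<mu> U > 0"
proof (rule ccontr)
  assume "\<not> emeasure \<mu> U > 0"
  then have "U \<in> null_sets \<mu>"
    using \<mu> openin_in_sets_borel_top[OF U(1)] unfolding radon_top_def by (simp add: null_sets_def)
  obtain \<rho> where \<rho>: "rho_function K H dx \<Delta>G \<Delta>K \<Delta>H \<rho>" "\<And>x. \<rho> x > 0"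
    and identity: "\<And>f. compactly_supported f \<Longrightarrow>
           (\<integral>p. (\<integral>k. (\<integral>h. f (- k + (SOME x. x \<in> p) + h) \<partial>dh) \<partial>dk) \<partial>\<mu>)
             = (\<integral>x. f x * complex_of_real (\<rho> x) \<partial>dx)"
    using rho unfolding arises_from_rho_def by blast
  have "U \<subseteq> dcosets K H" and open_preimage: "open (dcoset K H -` U)"
    using U(1) unfolding openin_dcoset_top by simp_all
  then obtain y where "dcoset K H y \<in> U" using U(2) unfolding dcosets_def by auto
  then have "y \<in> dcoset K H -` U" by simp
  then obtain g :: "'a \<Rightarrow> real" and C
    where g: "continuous_on UNIV g" "\<And>x. 0 \<le> g x" "\<And>x. g x \<le> 1" "g y = 1"
    and C: "compact C" "C \<subseteq> dcoset K H -` U" "\<And>x. g x \<noteq> 0 \<Longrightarrow> x \<in> C"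
    using exists_compactly_supported_bump[OF lc open_preimage] by blast
  define f where "f x = complex_of_real (g x)" for x
  have "compactly_supported f"
    using g(1) C(1,3) unfolding f_def by (intro compactly_supportedI) (auto intro: continuous_intros)
  have lhs: "(\<integral>p. (\<integral>k. (\<integral>h. f (- k + (SOME x. x \<in> p) + h) \<partial>dh) \<partial>dk) \<partial>\<mu>) = 0"
  proof (rule dcoset_iterated_integral_eq_0[OF K H _ _ \<open>U \<in> null_sets \<mu>\<close>])
    show "AE k in dk. k \<in> K" "AE h in dh. h \<in> H"
      using haar(2,3) H K AE_in_radon_on unfolding haar_on_def closed_subgroup_def by blast+
    show "space \<mu> \<subseteq> dcosets K H" using \<mu> unfolding radon_top_def topspace_dcoset_top by simp
    show "dcoset K H x \<in> U" if "f x \<noteq> 0" for x using that C(2,3) unfolding f_def by auto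
  qed
  have "(\<integral>x. g x * \<rho> x \<partial>dx) > 0"
    using integral_bump_mult_rho_pos[OF add haar(1) \<rho>(1,2) g C(1,3)] .
  moreover have "(\<integral>x. f x * complex_of_real (\<rho> x) \<partial>dx) = complex_of_real (\<integral>x. g x * \<rho> x \<partial>dx)"
    unfolding f_def by (simp flip: of_real_mult)
  ultimately show False using identity[OF \<open>compactly_supported f\<close>] lhs by simp
qed

theorem proposition4p6:
  fixes K H :: "'a::{group_add, t2_space} set"
    and dx dk dh :: "'a measure"
    and \<Delta>G \<Delta>K \<Delta>H :: "'a \<Rightarrow> real"
    and \<mu> :: "'a set measure"
  assumes "continuous_on UNIV (\<lambda>p::'a \<times> 'a. fst p + snd p)"
    and "continuous_on UNIV (uminus :: 'a \<Rightarrow> 'a)"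
    and "locally_compact_space (euclidean :: 'a topology)"
    and "closed_subgroup H" and "closed_subgroup K"
    and "haar_on UNIV dx" and "haar_on K dk" and "haar_on H dh"
    and "modular_fn UNIV dx \<Delta>G" and "modular_fn K dk \<Delta>K" and "modular_fn H dh \<Delta>H"
    and "radon_top (dcoset_top K H) \<mu>"
    and "strongly_quasi_invariant K H \<mu>"
    and "arises_from_rho K H dx dk dh \<Delta>G \<Delta>K \<Delta>H \<mu>"
  shows "measure_support (dcoset_top K H) \<mu> = dcosets K H"
  using emeasure_open_pos_arises_from_rho[OF assms(1,3-8,12,14)]
  unfolding measure_support_def topspace_dcoset_top by blast

end
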